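(* For every $\beta\ge0$ there exists a function $f\in\mathcal{S}$ such that $C_\beta[f]\notin\mathcal{S}$.
   Context: $\mathbb{D}$ is the open unit disk; $\mathcal{A}$ the class of analytic $f$ on $\mathbb{D}$ with $f(0)=0$, $f'(0)=1$; $\mathcal{S}\subset\mathcal{A}$ the univalent functions. For $\beta\ge0$ and $f$ analytic on $\mathbb{D}$ with $f(0)=0$, $C_\beta[f](z)=\int_0^z \frac{f(w)}{w(1-w)^\beta}\,dw$ (principal branch of $(1-w)^\beta$). *)

theory Defs
  imports "HOL-Complex_Analysis.Complex_Analysis"
begin

definition class_S :: "(complex \<Rightarrow> complex) set" where
  "class_S = {f. f holomorphic_on ball 0 1 \<and> f 0 = 0 \<and> deriv f 0 = 1 \<and> inj_on f (ball 0 1)}"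

text \<open>The integrand f(w) / (w (1-w)^beta), with its removable singularity at 0
  filled in by the value f'(0). Principal branch: (1-w) powr beta = exp(beta * Ln(1-w)).\<close>
definition cesaro_integrand :: "real \<Rightarrow> (complex \<Rightarrow> complex) \<Rightarrow> complex \<Rightarrow> complex" where
  "cesaro_integrand \<beta> f w =
     (if w = 0 then deriv f 0 else f w / (w * (1 - w) powr (of_real \<beta>)))"

definition cesaro_op :: "real \<Rightarrow> (complex \<Rightarrow> complex) \<Rightarrow> complex \<Rightarrow> complex" where
  "cesaro_op \<beta> f z = contour_integral (linepath 0 z) (cesaro_integrand \<beta> f)"

end

theory Submission
  imports Defs
begin

(*
  The witness is f(z) = (((1 + z)/(1 - z))^mu - 1)/(2 mu) with mu = -1 + i. The logarithm of the
  Cayley map sends the disk onto the strip |Im w| < pi/2, on which w |-> exp (mu w) is injective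
  (mu (w - w') is never a nonzero multiple of 2 pi i there), so f is univalent.

  Substitute z = (e^s - 1)/(e^s + 1) with Re s < 0, |Im s| < pi/2. Because mu + 1 = i, the
  derivative of Psi(s) = C_beta[f](z) is 2^(-beta)/mu (e^(is) - e^s) (1 + e^s)^beta / (e^(2s) - 1),
  which for Re s -> -infinity is uniformly close to -2^(-beta) e^(is)/mu, the derivative of a
  function that is 2 pi-periodic in Re s. Hence far to the left Psi(c) is close to Psi(c - 2 pi),
  while on the circle |s - c| = 1/2 the periodic part keeps Psi(s) - Psi(c - 2 pi) away from 0;
  by the minimum modulus principle Psi takes the value Psi(c - 2 pi) somewhere in that disc. The two
  corresponding points z are distinct, so C_beta[f] is not injective.
*)

lemma Re_exp_pos:
  assumes "\<bar>Im s\<bar> < pi / 2"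
  shows "0 < Re (exp s)"
  using assms cos_gt_zero_pi[of "Im s"] by (simp add: Re_exp)

lemma of_real_divide_powr:
  fixes z w :: complex
  assumes "0 < r" "z \<notin> \<real>\<^sub>\<le>\<^sub>0"
  shows "(of_real r / z) powr w = of_real r powr w / z powr w"
proof -
  have "z \<noteq> 0"
    using assms(2) by auto
  have "Ln (of_real r / z) = of_real (ln r) - Ln z"
    using Ln_times_of_real[of r "inverse z"] Ln_inverse[OF assms(2)] assms(1) \<open>z \<noteq> 0\<close>
    by (simp add: divide_inverse Ln_of_real)
  then show ?thesis
    using assms \<open>z \<noteq> 0\<close> by (simp add: powr_def Ln_of_real right_diff_distrib exp_diff)
qed

lemma norm_one_plus_powr_minus_one_le:
  fixes u :: complex
  assumes "norm u \<le> 1/2" "0 \<le> b" "b * norm u \<le> 1/4"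
  shows "norm ((1 + u) powr of_real b - 1) \<le> 3 * b * norm u"
proof -
  have "1 + u \<noteq> 0"
  proof
    assume "1 + u = 0"
    then have "u = -1"
      by (simp add: add_eq_0_iff)
    with assms(1) show False
      by simp
  qed
  have "norm (Ln (1 + u) - u) \<le> (norm u)\<^sup>2 / (1 - norm u)"
    using assms(1) by (intro Ln_approx_linear) simp
  also have "\<dots> \<le> norm u"
    using assms(1) by (simp add: divide_le_eq power2_eq_square mult_left_mono)
  finally have Ln_bound: "norm (Ln (1 + u)) \<le> 2 * norm u"
    using norm_triangle_ineq2[of "Ln (1 + u)" u] by simp
  have z: "norm (of_real b * Ln (1 + u)) \<le> 2 * b * norm u"
    using mult_left_mono[OF Ln_bound assms(2)] assms(2) by (simp add: norm_mult mult_ac)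
  then have "norm (exp (of_real b * Ln (1 + u)) - 1) \<le> 3 / 2 * norm (of_real b * Ln (1 + u))"
    using assms(3) by (intro norm_exp_bounds(2)) simp
  also have "\<dots> \<le> 3 * b * norm u"
    using z by simp
  finally show ?thesis
    using \<open>1 + u \<noteq> 0\<close> by (simp add: powr_def mult.commute)
qed

lemma norm_exp_ii_diff_ge:
  fixes s :: complex and c :: real
  assumes "norm (s - of_real c) = 1/2"
  shows "1/4 \<le> norm (exp (\<i> * s) - exp (\<i> * of_real c))"
proof -
  have "norm (\<i> * (s - of_real c)) = 1/2"
    using assms by (simp add: norm_mult)
  then have "1/4 \<le> norm (exp (\<i> * (s - of_real c)) - 1)"
    using norm_exp_bounds(1)[of "\<i> * (s - of_real c)"] by simp
  moreover have "exp (\<i> * s) - exp (\<i> * of_real c) = exp (\<i> * of_real c) * (exp (\<i> * (s - of_real c)) - 1)"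
    by (simp add: algebra_simps flip: exp_add)
  ultimately show ?thesis
    by (simp add: norm_mult)
qed

lemma zero_in_ball_if_norm_centre_less:
  fixes f :: "complex \<Rightarrow> complex"
  assumes "0 < r" "f holomorphic_on ball c r" "continuous_on (cball c r) f"
    and centre: "norm (f c) < m" and sphere: "\<And>z. z \<in> sphere c r \<Longrightarrow> m \<le> norm (f z)"
  shows "\<exists>z\<in>ball c r. f z = 0"
proof (rule ccontr)
  assume no_zero: "\<not> (\<exists>z\<in>ball c r. f z = 0)"
  have "0 < m"
    using centre norm_ge_zero[of "f c"] by linarith
  then have "f z \<noteq> 0" if "z \<in> sphere c r" for z
    using sphere[OF that] by auto
  with no_zero have nonzero: "f z \<noteq> 0" if "z \<in> cball c r" for z
    using that by (auto simp: cball_def ball_def sphere_def order_le_less)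
  have "norm (inverse (f c)) \<le> inverse m"
  proof (rule maximum_modulus_frontier[of "\<lambda>z. inverse (f z)" "ball c r"])
    show "(\<lambda>z. inverse (f z)) holomorphic_on interior (ball c r)"
      using assms(2) nonzero by (auto intro!: holomorphic_intros)
    show "continuous_on (closure (ball c r)) (\<lambda>z. inverse (f z))"
      using assms(1,3) nonzero by (auto intro!: continuous_intros)
    show "norm (inverse (f z)) \<le> inverse m" if "z \<in> frontier (ball c r)" for z
      using that sphere[of z] \<open>0 < m\<close> assms(1) by (simp add: norm_inverse le_imp_inverse_le)
  qed (use assms(1) in auto)
  moreover have "0 < norm (f c)"
    using nonzero assms(1) by simp
  ultimately show False
    using centre \<open>0 < m\<close> by (simp add: norm_inverse inverse_le_iff_le)
qed

lemma near_periodic_deviation_le: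
  fixes \<Psi> \<psi> :: "complex \<Rightarrow> complex" and a :: complex and c :: real
  assumes "convex R" "of_real (c - 2 * pi) \<in> R" "s \<in> R"
    and \<Psi>: "\<And>s. s \<in> R \<Longrightarrow> (\<Psi> has_field_derivative \<psi> s) (at s)"
    and \<psi>: "\<And>s. s \<in> R \<Longrightarrow> norm (\<psi> s - \<i> * a * exp (\<i> * s)) \<le> norm a / 100"
  shows "norm (\<Psi> s - \<Psi> (of_real (c - 2 * pi)) - a * (exp (\<i> * s) - exp (\<i> * of_real c)))
           \<le> norm a / 100 * norm (s - of_real (c - 2 * pi))"
proof -
  define \<Theta> where "\<Theta> s = \<Psi> s - a * exp (\<i> * s)" for s
  have "((\<lambda>s. a * exp (\<i> * s)) has_field_derivative \<i> * a * exp (\<i> * s)) (at s)" for s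
    by (auto intro!: derivative_eq_intros)
  then have "(\<Theta> has_field_derivative \<psi> s - \<i> * a * exp (\<i> * s)) (at s within R)" if "s \<in> R" for s
    unfolding \<Theta>_def using DERIV_diff[OF \<Psi>[OF that]] has_field_derivative_at_within by blast
  then have "norm (\<Theta> s - \<Theta> (of_real (c - 2 * pi))) \<le> norm a / 100 * norm (s - of_real (c - 2 * pi))"
    by (rule field_differentiable_bound[OF \<open>convex R\<close> _ \<psi> assms(3,2)])
  moreover have "exp (\<i> * of_real (c - 2 * pi)) = exp (\<i> * of_real c)"
    by (simp add: algebra_simps exp_diff)
  ultimately show ?thesis
    by (simp add: \<Theta>_def algebra_simps)
qed

lemma near_periodic_repeats_value:
  fixes \<Psi> \<psi> :: "complex \<Rightarrow> complex" and a :: complex and c :: real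
  assumes "convex R" "cball (of_real c) (1/2) \<subseteq> R" "of_real (c - 2 * pi) \<in> R" "a \<noteq> 0"
    and \<Psi>: "\<And>s. s \<in> R \<Longrightarrow> (\<Psi> has_field_derivative \<psi> s) (at s)"
    and \<psi>: "\<And>s. s \<in> R \<Longrightarrow> norm (\<psi> s - \<i> * a * exp (\<i> * s)) \<le> norm a / 100"
  shows "\<exists>s\<in>ball (of_real c) (1/2). \<Psi> s = \<Psi> (of_real (c - 2 * pi))"
proof -
  let ?c = "complex_of_real c" and ?\<sigma> = "complex_of_real (c - 2 * pi)"
  have deviation: "norm (\<Psi> s - \<Psi> ?\<sigma> - a * (exp (\<i> * s) - exp (\<i> * ?c))) \<le> norm a / 100 * norm (s - ?\<sigma>)"
    if "s \<in> R" for s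
    using near_periodic_deviation_le[OF assms(1,3) that \<Psi> \<psi>] .
  have "norm (?c - ?\<sigma>) = 2 * pi"
    by (simp flip: of_real_diff)
  moreover have "?c \<in> R"
    using assms(2) by auto
  ultimately have "norm (\<Psi> ?c - \<Psi> ?\<sigma>) \<le> norm a / 100 * (2 * pi)"
    using deviation[of ?c] by simp
  also have "\<dots> < norm a / 8"
    using pi_less_4 \<open>a \<noteq> 0\<close> by simp
  finally have centre: "norm (\<Psi> ?c - \<Psi> ?\<sigma>) < norm a / 8" .
  have sphere: "norm a / 8 \<le> norm (\<Psi> s - \<Psi> ?\<sigma>)" if s: "s \<in> sphere ?c (1/2)" for s
  proof -
    have "norm (s - ?c) = 1/2"
      using s by (simp add: dist_norm norm_minus_commute)
    then have "norm a / 4 \<le> norm (a * (exp (\<i> * s) - exp (\<i> * ?c)))"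
      using mult_left_mono[OF norm_exp_ii_diff_ge norm_ge_zero] by (simp add: norm_mult)
    moreover have "norm (s - ?\<sigma>) \<le> 7"
      using dist_triangle[of s ?\<sigma> ?c] \<open>norm (s - ?c) = 1/2\<close> \<open>norm (?c - ?\<sigma>) = 2 * pi\<close> pi_approx
      by (simp add: dist_norm)
    then have "norm a / 100 * norm (s - ?\<sigma>) \<le> norm a / 100 * 7"
      by (simp add: mult_left_mono)
    moreover have "s \<in> R"
      using s assms(2) sphere_cball by blast
    ultimately show ?thesis
      using deviation[OF \<open>s \<in> R\<close>] norm_triangle_ineq2[of "a * (exp (\<i> * s) - exp (\<i> * ?c))" "\<Psi> s - \<Psi> ?\<sigma>"]
        norm_minus_commute[of "\<Psi> s - \<Psi> ?\<sigma>" "a * (exp (\<i> * s) - exp (\<i> * ?c))"] norm_ge_zero[of a]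
      by linarith
  qed
  have "\<Psi> holomorphic_on ball ?c (1/2)"
    unfolding holomorphic_on_open[OF open_ball] using \<Psi> assms(2) by (meson ball_subset_cball subsetD)
  moreover have "continuous_on (cball ?c (1/2)) \<Psi>"
    using \<Psi> assms(2) DERIV_isCont by (blast intro: continuous_at_imp_continuous_on)
  ultimately have "\<exists>s\<in>ball ?c (1/2). \<Psi> s - \<Psi> ?\<sigma> = 0"
    using zero_in_ball_if_norm_centre_less[of "1/2" "\<lambda>s. \<Psi> s - \<Psi> ?\<sigma>", OF _ _ _ centre sphere]
    by (simp add: holomorphic_on_diff continuous_on_diff)
  then show ?thesis
    by simp
qed

definition cayley :: "complex \<Rightarrow> complex" where
  "cayley z = (1 + z) / (1 - z)"

definition cayley_inv :: "complex \<Rightarrow> complex" where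
  "cayley_inv w = (w - 1) / (w + 1)"

definition \<mu> :: complex where
  "\<mu> = -1 + \<i>"

lemma \<mu>_nonzero [simp]: "\<mu> \<noteq> 0"
  by (simp add: \<mu>_def complex_eq_iff)

definition cayley_power :: "complex \<Rightarrow> complex" where
  "cayley_power z = (exp (\<mu> * Ln (cayley z)) - 1) / (2 * \<mu>)"

lemma Re_cayley_pos:
  assumes "norm z < 1"
  shows "0 < Re (cayley z)"
proof -
  have "z \<noteq> 1"
    using assms by auto
  have "Re (cayley z) = (1 - (norm z)\<^sup>2) / (norm (1 - z))\<^sup>2"
    unfolding cayley_def Re_divide cmod_power2 by (simp add: algebra_simps power2_eq_square)
  moreover have "(norm z)\<^sup>2 < 1"
    using assms by (simp add: power_less_one_iff)
  ultimately show ?thesis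
    using \<open>z \<noteq> 1\<close> by simp
qed

lemma inj_on_cayley: "inj_on cayley (- {1})"
proof (rule inj_onI)
  fix z w assume "z \<in> - {1}" "w \<in> - {1}" "cayley z = cayley w"
  then have "(1 + z) * (1 - w) = (1 + w) * (1 - z)"
    by (simp add: cayley_def divide_eq_eq field_simps)
  then show "z = w"
    by (simp add: algebra_simps)
qed

lemma cayley_cayley_inv:
  assumes "w \<noteq> -1"
  shows "cayley (cayley_inv w) = w"
proof -
  have "w + 1 \<noteq> 0"
    using assms by (metis add.commute add_eq_0_iff)
  then have "1 + cayley_inv w = w * (2 / (w + 1))" "1 - cayley_inv w = 2 / (w + 1)"
    unfolding cayley_inv_def by (simp_all add: field_simps)
  with \<open>w + 1 \<noteq> 0\<close> show ?thesis
    unfolding cayley_def by simp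
qed

lemma norm_cayley_inv_less_one:
  assumes "0 < Re w"
  shows "norm (cayley_inv w) < 1"
proof -
  have "(Re w - 1)\<^sup>2 + (Im w)\<^sup>2 < (Re w + 1)\<^sup>2 + (Im w)\<^sup>2"
    using assms by (simp add: power2_eq_square algebra_simps)
  then have "(norm (w - 1))\<^sup>2 < (norm (w + 1))\<^sup>2"
    by (simp add: cmod_power2)
  then have "norm (w - 1) < norm (w + 1)"
    by (meson norm_ge_zero power_less_imp_less_base)
  then show ?thesis
    unfolding cayley_inv_def by (simp add: norm_divide divide_less_eq)
qed

lemma cayley_inv_exp_in_ball:
  assumes "\<bar>Im s\<bar> < pi / 2"
  shows "cayley_inv (exp s) \<in> ball 0 1"
  using norm_cayley_inv_less_one[OF Re_exp_pos[OF assms]] by simp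

lemma cayley_inv_has_field_derivative:
  assumes "w \<noteq> -1"
  shows "(cayley_inv has_field_derivative 2 / (w + 1)\<^sup>2) (at w)"
proof -
  have "w + 1 \<noteq> 0"
    using assms by (metis add.commute add_eq_0_iff)
  then show ?thesis
    unfolding cayley_inv_def
    by (auto intro!: derivative_eq_intros simp: field_simps power2_eq_square)
qed

lemma inj_on_exp_mu_strip: "inj_on (\<lambda>w. exp (\<mu> * w)) {w. \<bar>Im w\<bar> < pi / 2}"
proof (rule inj_onI)
  fix a b assume a: "a \<in> {w. \<bar>Im w\<bar> < pi / 2}" and b: "b \<in> {w. \<bar>Im w\<bar> < pi / 2}"
    and "exp (\<mu> * a) = exp (\<mu> * b)"
  then obtain n :: int where n: "\<mu> * a = \<mu> * b + of_int (2 * n) * pi * \<i>"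
    by (auto simp: exp_eq)
  have "Re a + Im a = Re b + Im b" "Re a - Im a = Re b - Im b + 2 * n * pi"
    using arg_cong[where f = Re, OF n] arg_cong[where f = Im, OF n] by (simp_all add: \<mu>_def)
  then have "Im b - Im a = n * pi"
    by linarith
  then have "\<bar>real_of_int n\<bar> * pi = \<bar>Im b - Im a\<bar>"
    by (simp add: abs_mult)
  also have "\<dots> < 1 * pi"
    using a b by simp
  finally have "\<bar>real_of_int n\<bar> * pi < 1 * pi" .
  then have "n = 0"
    by (simp add: mult_less_cancel_right)
  with n show "a = b"
    by (simp add: \<mu>_def)
qed

lemma cayley_power_0 [simp]: "cayley_power 0 = 0"
  by (simp add: cayley_power_def cayley_def)

lemma cayley_power_holomorphic: "cayley_power holomorphic_on ball 0 1"
proof -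
  have "cayley z \<notin> \<real>\<^sub>\<le>\<^sub>0" if "z \<in> ball 0 1" for z
    using Re_cayley_pos[of z] that by (auto simp: complex_nonpos_Reals_iff)
  then show ?thesis
    unfolding cayley_power_def cayley_def by (auto intro!: holomorphic_intros)
qed

lemma cayley_power_has_field_derivative_0: "(cayley_power has_field_derivative 1) (at 0)"
proof -
  have "cayley 0 = 1"
    by (simp add: cayley_def)
  have "(cayley has_field_derivative 2) (at 0)"
    unfolding cayley_def by (auto intro!: derivative_eq_intros)
  then show ?thesis
    unfolding cayley_power_def
    by (auto intro!: derivative_eq_intros simp: \<open>cayley 0 = 1\<close>)
qed

lemma inj_on_cayley_power: "inj_on cayley_power (ball 0 1)"
proof (rule inj_onI)
  fix z w assume z: "z \<in> ball 0 1" and w: "w \<in> ball 0 1" and "cayley_power z = cayley_power w"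
  then have "exp (\<mu> * Ln (cayley z)) = exp (\<mu> * Ln (cayley w))"
    by (simp add: cayley_power_def)
  moreover have "\<bar>Im (Ln (cayley z))\<bar> < pi / 2" "\<bar>Im (Ln (cayley w))\<bar> < pi / 2"
    using z w by (metis Re_Ln_pos_lt_imp Re_cayley_pos mem_ball_0)+
  ultimately have "Ln (cayley z) = Ln (cayley w)"
    using inj_on_exp_mu_strip by (auto dest: inj_onD)
  moreover have "cayley z \<noteq> 0" "cayley w \<noteq> 0"
    using z w Re_cayley_pos by fastforce+
  ultimately have "cayley z = cayley w"
    by (metis exp_Ln)
  moreover have "z \<noteq> 1" "w \<noteq> 1"
    using z w by auto
  ultimately show "z = w"
    using inj_on_cayley by (auto dest: inj_onD)
qed

lemma cayley_power_in_class_S: "cayley_power \<in> class_S"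
  using cayley_power_holomorphic cayley_power_has_field_derivative_0 inj_on_cayley_power
  by (auto simp: class_S_def DERIV_imp_deriv)

lemma cesaro_integrand_holomorphic:
  assumes f: "f holomorphic_on ball 0 1" and "f 0 = 0"
  shows "cesaro_integrand \<beta> f holomorphic_on ball 0 1"
proof (rule no_isolated_singularity'[where K = "{0}"])
  have off_0: "cesaro_integrand \<beta> f w = f w / (w * (1 - w) powr of_real \<beta>)" if "w \<noteq> 0" for w
    using that by (simp add: cesaro_integrand_def)
  have "1 - w \<notin> \<real>\<^sub>\<le>\<^sub>0" if "w \<in> ball 0 1" for w :: complex
    using that complex_Re_le_cmod[of w] by (auto simp: complex_nonpos_Reals_iff)
  moreover have "f holomorphic_on ball 0 1 - {0}"
    using f by (rule holomorphic_on_subset) auto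
  ultimately have "(\<lambda>w. f w / (w * (1 - w) powr of_real \<beta>)) holomorphic_on ball 0 1 - {0}"
    by (auto intro!: holomorphic_intros)
  then show "cesaro_integrand \<beta> f holomorphic_on ball 0 1 - {0}"
    by (rule holomorphic_transform) (simp add: off_0)
  have "(f has_field_derivative deriv f 0) (at 0)"
    using f by (simp add: holomorphic_derivI)
  then have "((\<lambda>w. f w / w) \<longlongrightarrow> deriv f 0) (at 0)"
    using \<open>f 0 = 0\<close> by (simp add: has_field_derivative_iff)
  moreover have "isCont (\<lambda>w::complex. (1 - w) powr of_real \<beta>) 0"
    by (rule isCont_powr_complex) (auto simp: complex_nonpos_Reals_iff)
  then have "((\<lambda>w::complex. (1 - w) powr of_real \<beta>) \<longlongrightarrow> 1) (at 0)"
    by (simp add: isCont_def)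
  ultimately have "((\<lambda>w. f w / w / (1 - w) powr of_real \<beta>) \<longlongrightarrow> deriv f 0 / 1) (at 0)"
    by (intro tendsto_divide) auto
  then have "((\<lambda>w. f w / w / (1 - w) powr of_real \<beta>) \<longlongrightarrow> deriv f 0) (at 0)"
    by simp
  then have "(cesaro_integrand \<beta> f \<longlongrightarrow> deriv f 0) (at 0)"
    by (rule Lim_transform_eventually) (auto simp: eventually_at_filter off_0)
  then have "(cesaro_integrand \<beta> f \<longlongrightarrow> cesaro_integrand \<beta> f 0) (at 0)"
    by (simp add: cesaro_integrand_def)
  then show "(cesaro_integrand \<beta> f \<longlongrightarrow> cesaro_integrand \<beta> f z) (at z within ball 0 1)"
    if "z \<in> {0}" for z
    using that by (auto intro: tendsto_within_subset)
qed auto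

lemma cesaro_op_has_field_derivative:
  assumes "f holomorphic_on ball 0 1" "f 0 = 0" "z \<in> ball 0 1"
  shows "(cesaro_op \<beta> f has_field_derivative cesaro_integrand \<beta> f z) (at z)"
proof -
  obtain G where G: "\<And>w. w \<in> ball 0 1 \<Longrightarrow>
      (G has_field_derivative cesaro_integrand \<beta> f w) (at w within ball 0 1)"
    using holomorphic_convex_primitive'[OF convex_ball open_ball cesaro_integrand_holomorphic[OF assms(1,2)]]
    by blast
  have primitive: "G w - G 0 = cesaro_op \<beta> f w" if "w \<in> ball 0 1" for w
  proof -
    have "closed_segment 0 w \<subseteq> ball 0 1"
      using that by (intro closed_segment_subset) auto
    then have "(cesaro_integrand \<beta> f has_contour_integral G w - G 0) (linepath 0 w)"
      using contour_integral_primitive[OF G, of "linepath 0 w"] by auto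
    then show ?thesis
      unfolding cesaro_op_def by (rule contour_integral_unique[symmetric])
  qed
  have "(G has_field_derivative cesaro_integrand \<beta> f z) (at z)"
    using G[OF assms(3)] at_within_open[OF assms(3) open_ball] by simp
  then have "((\<lambda>w. G w - G 0) has_field_derivative cesaro_integrand \<beta> f z) (at z)"
    using DERIV_diff[OF _ DERIV_const] by simp
  then show ?thesis
    by (rule has_field_derivative_transform_within_open[OF _ open_ball assms(3) primitive])
qed

definition cesaro_pullback_deriv :: "real \<Rightarrow> complex \<Rightarrow> complex" where
  "cesaro_pullback_deriv \<beta> s =
     of_real (2 powr - \<beta>) / \<mu> * (exp (\<i> * s) - exp s) * (1 + exp s) powr of_real \<beta> / ((exp s)\<^sup>2 - 1)"

lemma cesaro_integrand_cayley_power_pullback: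
  assumes "Re s < 0" "\<bar>Im s\<bar> < pi / 2"
  shows "cesaro_integrand \<beta> cayley_power (cayley_inv (exp s)) * (2 / (exp s + 1)\<^sup>2 * exp s)
           = cesaro_pullback_deriv \<beta> s"
proof -
  define u where "u = exp s"
  define E where "E = exp (\<mu> * s)"
  define D where "D = (1 + u) powr of_real \<beta>"
  define K where "K = complex_of_real (2 powr \<beta>)"
  have "0 < Re u"
    using Re_exp_pos[OF assms(2)] by (simp add: u_def)
  then have "u + 1 \<noteq> 0" "u \<noteq> -1" "1 + u \<notin> \<real>\<^sub>\<le>\<^sub>0"
    by (auto simp: complex_eq_iff complex_nonpos_Reals_iff)
  have "norm u < 1"
    using assms(1) by (simp add: u_def norm_exp_eq_Re)
  then have "u \<noteq> 1"
    by auto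
  have "cayley_power (cayley_inv u) = (E - 1) / (2 * \<mu>)"
    using assms(2) \<open>u \<noteq> -1\<close> by (simp add: cayley_power_def cayley_cayley_inv u_def E_def)
  moreover have "1 - cayley_inv u = of_real 2 / (1 + u)"
    using \<open>u + 1 \<noteq> 0\<close> by (simp add: cayley_inv_def field_simps)
  then have "(1 - cayley_inv u) powr of_real \<beta> = K / D"
    using of_real_divide_powr[of 2, OF _ \<open>1 + u \<notin> \<real>\<^sub>\<le>\<^sub>0\<close>] powr_of_real[of 2 \<beta>]
    by (simp add: K_def D_def)
  moreover have "cayley_inv u \<noteq> 0"
    using \<open>u \<noteq> 1\<close> \<open>u + 1 \<noteq> 0\<close> by (simp add: cayley_inv_def)
  ultimately have integrand:
    "cesaro_integrand \<beta> cayley_power (cayley_inv u) = (E - 1) / (2 * \<mu>) / (cayley_inv u * (K / D))"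
    by (simp add: cesaro_integrand_def)
  have "exp (\<i> * s) = E * u"
    by (simp add: u_def E_def \<mu>_def flip: exp_add) (simp add: algebra_simps)
  moreover have "(exp s)\<^sup>2 - 1 = (u - 1) * (u + 1)"
    by (simp add: u_def algebra_simps power2_eq_square)
  ultimately have pullback:
    "cesaro_pullback_deriv \<beta> s = (E * u - u) * D / (K * \<mu> * ((u - 1) * (u + 1)))"
    by (simp add: cesaro_pullback_deriv_def D_def K_def powr_minus divide_inverse flip: u_def)
  have "K \<noteq> 0" "D \<noteq> 0"
    using \<open>u + 1 \<noteq> 0\<close> by (simp_all add: K_def D_def powr_def add.commute)
  then show ?thesis
    unfolding u_def[symmetric] integrand pullback unfolding cayley_inv_def
    using \<open>u + 1 \<noteq> 0\<close> \<open>u \<noteq> 1\<close>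
    by (simp add: divide_simps power2_eq_square) (simp add: algebra_simps)
qed

lemma cesaro_pullback_has_field_derivative:
  assumes "Re s < 0" "\<bar>Im s\<bar> < pi / 2"
  shows "((\<lambda>s. cesaro_op \<beta> cayley_power (cayley_inv (exp s)))
           has_field_derivative cesaro_pullback_deriv \<beta> s) (at s)"
proof -
  have "exp s \<noteq> -1"
    using Re_exp_pos[OF assms(2)] by auto
  have "((\<lambda>s. cesaro_op \<beta> cayley_power (cayley_inv (exp s))) has_field_derivative
      cesaro_integrand \<beta> cayley_power (cayley_inv (exp s)) * (2 / (exp s + 1)\<^sup>2 * exp s)) (at s)"
    by (intro DERIV_chain2[OF cesaro_op_has_field_derivative[OF cayley_power_holomorphic cayley_power_0]]
        DERIV_chain2[OF cayley_inv_has_field_derivative] DERIV_exp cayley_inv_exp_in_ball assms(2)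
        \<open>exp s \<noteq> -1\<close>)
  then show ?thesis
    unfolding cesaro_integrand_cayley_power_pullback[OF assms] .
qed

lemma norm_pullback_error_le:
  fixes u v D :: complex
  assumes u: "norm u \<le> 1/1000" and D: "norm (D - 1) \<le> 1/1000" and v: "norm v \<le> 2"
  shows "norm ((v - u) * D / (u\<^sup>2 - 1) + v) \<le> 1/100"
proof -
  have "norm (u\<^sup>2) \<le> 1/1000000"
    using mult_mono[OF u u] by (simp add: norm_power power2_eq_square norm_mult)
  then have denominator: "1/2 \<le> norm (u\<^sup>2 - 1)"
    using norm_triangle_ineq2[of 1 "u\<^sup>2"] by (simp add: norm_minus_commute)
  have "norm D \<le> 2"
    using D norm_triangle_ineq2[of D 1] by simp
  have "norm (v * (D - 1)) \<le> 2 * (1/1000)"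
    unfolding norm_mult using v D by (intro mult_mono) auto
  moreover have "norm (u * D) \<le> 1/1000 * 2"
    unfolding norm_mult using u \<open>norm D \<le> 2\<close> by (intro mult_mono) auto
  moreover have "norm (v * u\<^sup>2) \<le> 2 * (1/1000000)"
    unfolding norm_mult using v \<open>norm (u\<^sup>2) \<le> 1/1000000\<close> by (intro mult_mono) auto
  ultimately have numerator: "norm (v * (D - 1) - u * D + v * u\<^sup>2) \<le> 1/200"
    using norm_triangle_ineq4[of "v * (D - 1)" "u * D"] norm_triangle_ineq[of "v * (D - 1) - u * D" "v * u\<^sup>2"]
    by linarith
  have "(v - u) * D / (u\<^sup>2 - 1) + v = (v * (D - 1) - u * D + v * u\<^sup>2) / (u\<^sup>2 - 1)"
  proof -
    have "u\<^sup>2 \<noteq> 1"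
      using denominator by auto
    then show ?thesis
      by (simp add: divide_simps) (simp add: algebra_simps)
  qed
  also have "norm \<dots> \<le> (1/200) / (1/2)"
    unfolding norm_divide using numerator denominator by (intro frac_le) auto
  finally show ?thesis
    by simp
qed

lemma cesaro_pullback_deriv_approx:
  assumes "0 \<le> \<beta>" "Re s \<le> ln (1 / (3000 * (\<beta> + 1)))" "\<bar>Im s\<bar> \<le> 1/2"
  defines "a \<equiv> \<i> * of_real (2 powr - \<beta>) / \<mu>"
  shows "norm (cesaro_pullback_deriv \<beta> s - \<i> * a * exp (\<i> * s)) \<le> norm a / 100"
proof -
  define \<delta> where "\<delta> = 1 / (3000 * (\<beta> + 1))"
  have "0 < \<delta>" "\<delta> \<le> 1/3000"
    using assms(1) by (simp_all add: \<delta>_def)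
  have "3 * \<beta> * \<delta> = \<beta> / (\<beta> + 1) / 1000"
    using assms(1) by (simp add: \<delta>_def field_simps)
  also have "\<dots> \<le> 1/1000"
    using assms(1) by simp
  finally have "3 * \<beta> * \<delta> \<le> 1/1000" .
  have "norm (exp s) = exp (Re s)"
    by (simp add: norm_exp_eq_Re)
  also have "\<dots> \<le> exp (ln \<delta>)"
    using assms(2) by (simp add: \<delta>_def)
  finally have u: "norm (exp s) \<le> \<delta>"
    using \<open>0 < \<delta>\<close> by simp
  have "norm (exp (\<i> * s)) \<le> exp (1/2)"
    using assms(3) by (simp add: norm_exp_eq_Re)
  then have v: "norm (exp (\<i> * s)) \<le> 2"
    using exp_half_le2 by linarith
  have "\<beta> * norm (exp s) \<le> \<beta> * \<delta>"
    using u assms(1) by (rule mult_left_mono)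
  then have "norm ((1 + exp s) powr of_real \<beta> - 1) \<le> 3 * \<beta> * norm (exp s)"
    using u \<open>\<delta> \<le> 1/3000\<close> \<open>3 * \<beta> * \<delta> \<le> 1/1000\<close> assms(1)
    by (intro norm_one_plus_powr_minus_one_le) auto
  also have "\<dots> \<le> 1/1000"
    using \<open>\<beta> * norm (exp s) \<le> \<beta> * \<delta>\<close> \<open>3 * \<beta> * \<delta> \<le> 1/1000\<close> by linarith
  finally have D: "norm ((1 + exp s) powr of_real \<beta> - 1) \<le> 1/1000" .
  define K where "K = complex_of_real (2 powr - \<beta>) / \<mu>"
  define X where "X = (exp (\<i> * s) - exp s) * (1 + exp s) powr of_real \<beta> / ((exp s)\<^sup>2 - 1) + exp (\<i> * s)"
  have "cesaro_pullback_deriv \<beta> s + K * exp (\<i> * s) = K * X"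
    unfolding cesaro_pullback_deriv_def K_def X_def
    by (simp only: distrib_left times_divide_eq_right mult.assoc)
  moreover have "norm X \<le> 1/100"
    unfolding X_def using u \<open>\<delta> \<le> 1/3000\<close> v D by (intro norm_pullback_error_le) auto
  moreover have "\<i> * a = - K" "norm a = norm K"
    by (simp_all add: a_def K_def norm_mult norm_divide)
  ultimately show ?thesis
    using mult_left_mono[OF _ norm_ge_zero, of "norm X" "1/100" K] by (simp add: norm_mult)
qed

lemma cesaro_pullback_repeats_value:
  assumes "0 \<le> \<beta>"
  obtains s \<sigma> where "Re s < 0" "\<bar>Im s\<bar> < pi / 2" "Re \<sigma> < 0" "\<bar>Im \<sigma>\<bar> < pi / 2" "Re s \<noteq> Re \<sigma>"
    and "cesaro_op \<beta> cayley_power (cayley_inv (exp s)) = cesaro_op \<beta> cayley_power (cayley_inv (exp \<sigma>))"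
proof -
  define \<rho> where "\<rho> = ln (1 / (3000 * (\<beta> + 1)))"
  define c where "c = \<rho> - 1/2"
  define R where "R = cbox (Complex (\<rho> - 1 - 2 * pi) (- 1/2)) (Complex \<rho> (1/2))"
  define a where "a = \<i> * of_real (2 powr - \<beta>) / \<mu>"
  have in_R: "s \<in> R \<longleftrightarrow> \<rho> - 1 - 2 * pi \<le> Re s \<and> Re s \<le> \<rho> \<and> \<bar>Im s\<bar> \<le> 1/2" for s
    by (auto simp: R_def in_cbox_complex_iff)
  have "\<rho> < 0"
    using assms by (simp add: \<rho>_def ln_div)
  then have strip: "Re s < 0" "\<bar>Im s\<bar> < pi / 2" if "s \<in> R" for s
    using that pi_gt3 by (auto simp: in_R)
  have cball_R: "cball (of_real c) (1/2) \<subseteq> R"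
  proof
    fix s :: complex assume "s \<in> cball (of_real c) (1/2)"
    then have "\<bar>Re s - c\<bar> \<le> 1/2" "\<bar>Im s\<bar> \<le> 1/2"
      using abs_Re_le_cmod[of "s - of_real c"] abs_Im_le_cmod[of "s - of_real c"]
      by (auto simp: dist_norm norm_minus_commute)
    then show "s \<in> R"
      unfolding in_R c_def using pi_gt3 by (intro conjI) arith+
  qed
  have \<sigma>_R: "of_real (c - 2 * pi) \<in> R"
    by (simp add: in_R c_def) (use pi_gt_zero in linarith)
  have approx: "norm (cesaro_pullback_deriv \<beta> s - \<i> * a * exp (\<i> * s)) \<le> norm a / 100" if "s \<in> R" for s
    using cesaro_pullback_deriv_approx[OF assms] that by (simp add: in_R \<rho>_def a_def)
  have "convex R" "a \<noteq> 0"
    by (simp_all add: R_def convex_box a_def)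
  then obtain s where s: "s \<in> ball (of_real c) (1/2)"
    and same_value: "cesaro_op \<beta> cayley_power (cayley_inv (exp s))
       = cesaro_op \<beta> cayley_power (cayley_inv (exp (of_real (c - 2 * pi))))"
    using near_periodic_repeats_value[OF _ cball_R \<sigma>_R _ cesaro_pullback_has_field_derivative approx] strip
    by blast
  have "\<bar>Re s - c\<bar> < 1/2"
    using s abs_Re_le_cmod[of "s - of_real c"] by (simp add: dist_norm norm_minus_commute)
  then have "Re s \<noteq> Re (of_real (c - 2 * pi))"
    using pi_gt3 by auto
  moreover have "s \<in> R"
    using s cball_R by auto
  ultimately show ?thesis
    using that strip \<sigma>_R same_value by blast
qed

lemma not_inj_on_cesaro_cayley_power:
  assumes "0 \<le> \<beta>"
  shows "\<not> inj_on (cesaro_op \<beta> cayley_power) (ball 0 1)"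
proof
  assume inj: "inj_on (cesaro_op \<beta> cayley_power) (ball 0 1)"
  obtain s \<sigma> where strip: "\<bar>Im s\<bar> < pi / 2" "\<bar>Im \<sigma>\<bar> < pi / 2" and "Re s \<noteq> Re \<sigma>"
    and same_value: "cesaro_op \<beta> cayley_power (cayley_inv (exp s))
      = cesaro_op \<beta> cayley_power (cayley_inv (exp \<sigma>))"
    using cesaro_pullback_repeats_value[OF assms] by metis
  have "cayley_inv (exp s) = cayley_inv (exp \<sigma>)"
    using inj_onD[OF inj same_value] cayley_inv_exp_in_ball strip by blast
  moreover have "exp s \<noteq> -1" "exp \<sigma> \<noteq> -1"
    using Re_exp_pos[OF strip(1)] Re_exp_pos[OF strip(2)] by auto
  ultimately have "exp s = exp \<sigma>"
    by (metis cayley_cayley_inv)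
  then have "exp (Re s) = exp (Re \<sigma>)"
    by (metis norm_exp_eq_Re)
  with \<open>Re s \<noteq> Re \<sigma>\<close> show False
    by simp
qed

theorem theorem2p18:
  fixes \<beta> :: real
  assumes "\<beta> \<ge> 0"
  shows "\<exists>f \<in> class_S. cesaro_op \<beta> f \<notin> class_S"
proof
  show "cayley_power \<in> class_S"
    by (rule cayley_power_in_class_S)
  show "cesaro_op \<beta> cayley_power \<notin> class_S"
    using not_inj_on_cesaro_cayley_power[OF assms] by (simp add: class_S_def)
qed

end
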